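(* Fix an integer $d\ge1$. For every $l>0$ there is a constant $C(l)>0$, depending only on $l$ and $d$ and not on $n$, such that for every $x\in\mathbb{R}^n$ whose Euclidean distance to each of the three points $0$, $e_1$, and $-\cos(g^{\circ d}(\pi))\,e_1$ is at least $l$, and at which $L$ is differentiable, $\|\nabla L(x)\|\ge C(l)$.
   Context: $e_1=(1,0,\dots,0)\in\mathbb{R}^n$; for $x\neq0$, $\theta(x)\in[0,\pi]$ is the angle between $x$ and $e_1$. $g(\theta)=\arccos\big(\frac{(\pi-\theta)\cos\theta+\sin\theta}{\pi}\big)$, $g^{\circ d}$ its $d$-fold composition. $L(x)=\frac12\|x\|^2-\|x\|\cos\big(g^{\circ d}(\theta(x))\big)+\frac12$. *)

theory Defs
  imports "HOL-Analysis.Analysis"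
begin

text \<open>The constant C must be independent of the dimension n, so n has to be quantified
inside the formula. We therefore model R^n concretely as the functions nat => real vanishing
outside the first n coordinates (coordinate 0 plays the role of the first coordinate).\<close>

definition Rn :: "nat \<Rightarrow> (nat \<Rightarrow> real) set" where
  "Rn n = {x. \<forall>i\<ge>n. x i = 0}"

definition vinner :: "nat \<Rightarrow> (nat \<Rightarrow> real) \<Rightarrow> (nat \<Rightarrow> real) \<Rightarrow> real" where
  "vinner n x y = (\<Sum>i<n. x i * y i)"

definition vnorm :: "nat \<Rightarrow> (nat \<Rightarrow> real) \<Rightarrow> real" where
  "vnorm n x = sqrt (\<Sum>i<n. (x i)\<^sup>2)"

definition vdist :: "nat \<Rightarrow> (nat \<Rightarrow> real) \<Rightarrow> (nat \<Rightarrow> real) \<Rightarrow> real" where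
  "vdist n x y = vnorm n (\<lambda>i. x i - y i)"

definition e1 :: "nat \<Rightarrow> real" where
  "e1 = (\<lambda>i. if i = 0 then 1 else 0)"

definition theta :: "nat \<Rightarrow> (nat \<Rightarrow> real) \<Rightarrow> real" where
  "theta n x = arccos (vinner n x e1 / (vnorm n x * vnorm n e1))"

definition g :: "real \<Rightarrow> real" where
  "g \<theta> = arccos (((pi - \<theta>) * cos \<theta> + sin \<theta>) / pi)"

definition L :: "nat \<Rightarrow> nat \<Rightarrow> (nat \<Rightarrow> real) \<Rightarrow> real" where
  "L d n x = (vnorm n x)\<^sup>2 / 2 - vnorm n x * cos ((g ^^ d) (theta n x)) + 1 / 2"

definition has_grad :: "nat \<Rightarrow> ((nat \<Rightarrow> real) \<Rightarrow> real) \<Rightarrow> (nat \<Rightarrow> real) \<Rightarrow> (nat \<Rightarrow> real) \<Rightarrow> bool" where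
  "has_grad n f x G \<longleftrightarrow> G \<in> Rn n \<and>
     (\<forall>\<epsilon>>0. \<exists>\<delta>>0. \<forall>y\<in>Rn n. vdist n y x < \<delta> \<longrightarrow>
        \<bar>f y - f x - vinner n G (\<lambda>i. y i - x i)\<bar> \<le> \<epsilon> * vdist n y x)"

definition differentiable_Rn :: "nat \<Rightarrow> ((nat \<Rightarrow> real) \<Rightarrow> real) \<Rightarrow> (nat \<Rightarrow> real) \<Rightarrow> bool" where
  "differentiable_Rn n f x \<longleftrightarrow> (\<exists>G. has_grad n f x G)"

end

theory Submission
  imports Defs
begin

(*
  Write x in polar form, r = |x| and theta = theta(x), and put h = g^d, so that
  L(x) = r^2/2 - r cos (h theta) + 1/2. The derivative of L in the radial unit direction is
  r - cos (h theta); in the unit direction tangent at x to the circle through x in the plane of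
  e1 and x it is sin (h theta) * h'(theta). Both are bounded by |grad L(x)| and neither involves n.
  Since 0 < g t <= t and g' > 0 on (0, pi), the angular term is positive and continuous on
  (0, pi), hence bounded below on [alpha, pi - alpha]. For theta within alpha of 0 or of pi,
  cos (h theta) is close to 1 or to cos (h pi), so a small radial term would put x close to e1
  or to -cos (h pi) e1, which the hypotheses exclude.
*)

section \<open>The angle map g and its iterates\<close>

definition g_cos :: "real \<Rightarrow> real" where
  "g_cos t = ((pi - t) * cos t + sin t) / pi"

lemma g_eq_arccos_g_cos: "g t = arccos (g_cos t)"
  by (simp add: g_def g_cos_def)

lemma g_cos_gt_minus_one:
  assumes "0 < t" "t \<le> pi"
  shows "-1 < g_cos t"
proof -
  have "pi * (g_cos t + 1) = (pi - t) * (cos t + 1) + sin t + t"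
    by (simp add: g_cos_def field_simps)
  also have "\<dots> > 0"
  proof -
    have "0 \<le> (pi - t) * (cos t + 1)"
      using assms cos_ge_minus_one[of t] by (intro mult_nonneg_nonneg) linarith+
    then show ?thesis
      using assms sin_ge_zero[of t] by linarith
  qed
  finally show ?thesis by (simp add: zero_less_mult_iff)
qed

lemma g_cos_less_one:
  assumes "0 < t" "t \<le> pi"
  shows "g_cos t < 1"
proof -
  have "pi * (1 - g_cos t) = (pi - t) * (1 - cos t) + (t - sin t)"
    by (simp add: g_cos_def field_simps)
  also have "\<dots> > 0"
  proof (cases "t = pi")
    case False
    have "cos t < cos 0"
      using assms False by (intro cos_monotone_0_pi) auto
    then show ?thesis
      using assms False sin_x_le_x[of t] by (simp add: add_pos_nonneg)
  qed simp
  finally show ?thesis by (simp add: zero_less_mult_iff)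
qed

lemma mult_cos_le_sin:
  fixes t :: real
  assumes "0 \<le> t" "t \<le> pi"
  shows "t * cos t \<le> sin t"
proof -
  have "sin 0 - 0 * cos 0 \<le> sin t - t * cos t"
  proof (rule DERIV_nonneg_imp_nondecreasing[OF assms(1)])
    fix x assume "0 \<le> x" "x \<le> t"
    then show "\<exists>y. ((\<lambda>x. sin x - x * cos x) has_real_derivative y) (at x) \<and> 0 \<le> y"
      using assms sin_ge_zero[of x]
      by (intro exI[of _ "x * sin x"] conjI derivative_eq_intros refl) (auto simp: algebra_simps)
  qed
  then show ?thesis by simp
qed

lemma cos_le_g_cos:
  assumes "0 \<le> t" "t \<le> pi"
  shows "cos t \<le> g_cos t"
proof -
  have "pi * g_cos t = pi * cos t + (sin t - t * cos t)"
    by (simp add: g_cos_def field_simps)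
  then show ?thesis
    using mult_cos_le_sin[OF assms] by (smt (verit) mult_le_cancel_left pi_gt_zero)
qed

lemma g_cos_bounds:
  assumes "0 \<le> t" "t \<le> pi"
  shows "-1 \<le> g_cos t \<and> g_cos t \<le> 1"
  using assms g_cos_gt_minus_one[of t] g_cos_less_one[of t]
  by (cases "t = 0") (auto simp: g_cos_def)

lemma g_le_self:
  assumes "0 \<le> t" "t \<le> pi"
  shows "0 \<le> g t \<and> g t \<le> t"
proof -
  have "arccos (g_cos t) \<le> arccos (cos t)"
    using cos_le_g_cos[OF assms] g_cos_bounds[OF assms] by (intro arccos_le_arccos) auto
  then show ?thesis
    using arccos_bounded g_cos_bounds[OF assms] arccos_cos[OF assms]
    by (simp add: g_eq_arccos_g_cos)
qed

lemma g_pos: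
  assumes "0 < t" "t \<le> pi"
  shows "0 < g t"
  using arccos_lt_bounded[OF g_cos_gt_minus_one[OF assms] g_cos_less_one[OF assms]]
  by (simp add: g_eq_arccos_g_cos)

lemma funpow_g_le_self:
  assumes "0 \<le> t" "t \<le> pi"
  shows "0 \<le> (g ^^ k) t \<and> (g ^^ k) t \<le> t"
proof (induction k)
  case (Suc k)
  then show ?case
    using g_le_self[of "(g ^^ k) t"] assms by auto
qed (use assms in auto)

lemma funpow_g_pos:
  assumes "0 < t" "t \<le> pi"
  shows "0 < (g ^^ k) t"
proof (induction k)
  case (Suc k)
  then show ?case
    using g_pos[of "(g ^^ k) t"] funpow_g_le_self[of t k] assms by auto
qed (use assms in auto)

definition g_deriv :: "real \<Rightarrow> real" where
  "g_deriv t = (pi - t) * sin t / (pi * sqrt (1 - (g_cos t)\<^sup>2))"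

lemma g_cos_sq_less_one:
  assumes "0 < t" "t \<le> pi"
  shows "(g_cos t)\<^sup>2 < 1"
  using g_cos_gt_minus_one[OF assms] g_cos_less_one[OF assms] by (simp add: abs_square_less_1)

lemma has_real_derivative_g:
  assumes "0 < t" "t \<le> pi"
  shows "(g has_real_derivative g_deriv t) (at t)"
proof -
  have "(g_cos has_real_derivative - (pi - t) * sin t / pi) (at t)"
    unfolding g_cos_def[abs_def] by (auto intro!: derivative_eq_intros simp: field_simps)
  from DERIV_chain2[OF DERIV_arccos[OF g_cos_gt_minus_one[OF assms] g_cos_less_one[OF assms]] this]
  have "(g has_real_derivative
      inverse (- sqrt (1 - (g_cos t)\<^sup>2)) * (- (pi - t) * sin t / pi)) (at t)"
    unfolding g_eq_arccos_g_cos[abs_def] .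
  also have "inverse (- sqrt (1 - (g_cos t)\<^sup>2)) * (- (pi - t) * sin t / pi) = g_deriv t"
    by (simp add: g_deriv_def divide_inverse algebra_simps)
  finally show ?thesis .
qed

lemma g_deriv_pos:
  assumes "0 < t" "t < pi"
  shows "0 < g_deriv t"
  using assms g_cos_sq_less_one[of t] sin_gt_zero[of t] by (simp add: g_deriv_def)

lemma isCont_g_deriv:
  assumes "0 < t" "t \<le> pi"
  shows "isCont g_deriv t"
  using g_cos_sq_less_one[OF assms] unfolding g_deriv_def g_cos_def[abs_def]
  by (auto intro!: continuous_intros)

definition funpow_g_deriv :: "nat \<Rightarrow> real \<Rightarrow> real" where
  "funpow_g_deriv k t = (\<Prod>j<k. g_deriv ((g ^^ j) t))"

lemma has_real_derivative_funpow_g: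
  assumes "0 < t" "t \<le> pi"
  shows "((g ^^ k) has_real_derivative funpow_g_deriv k t) (at t)"
proof (induction k)
  case (Suc k)
  have "0 < (g ^^ k) t" "(g ^^ k) t \<le> pi"
    using funpow_g_pos[OF assms] funpow_g_le_self[of t k] assms by auto
  from DERIV_chain2[OF has_real_derivative_g[OF this] Suc]
  show ?case by (simp add: funpow_g_deriv_def mult.commute)
qed (simp add: funpow_g_deriv_def)

lemma funpow_g_deriv_pos:
  assumes "0 < t" "t < pi"
  shows "0 < funpow_g_deriv k t"
  unfolding funpow_g_deriv_def
  using assms funpow_g_pos[of t] funpow_g_le_self[of t] g_deriv_pos
  by (intro prod_pos) (smt (verit))

lemma isCont_funpow_g_deriv:
  assumes "0 < t" "t \<le> pi"
  shows "isCont (funpow_g_deriv k) t"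
  unfolding funpow_g_deriv_def
proof (intro continuous_intros)
  fix j
  have "isCont (g ^^ j) t"
    using DERIV_isCont[OF has_real_derivative_funpow_g[OF assms]] .
  moreover have "isCont g_deriv ((g ^^ j) t)"
    using assms funpow_g_pos[of t j] funpow_g_le_self[of t j] by (intro isCont_g_deriv) auto
  ultimately show "isCont (\<lambda>t. g_deriv ((g ^^ j) t)) t"
    by (rule isCont_o2)
qed

section \<open>A lower bound in polar coordinates\<close>

lemma polar_sq_dist_less:
  fixes r u c z l :: real
  assumes "0 \<le> r" "\<bar>r - u\<bar> < l / 4" "\<bar>r - u\<bar> < 1" "\<bar>u - c\<bar> < l / 4"
    and "u \<le> 1" "c \<le> 1" "-1 \<le> z" "1 + z < l\<^sup>2 / 16"
  shows "r\<^sup>2 + 2 * c * r * z + c\<^sup>2 < l\<^sup>2"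
proof -
  have "\<bar>r - c\<bar> < l / 2"
    using assms by linarith
  then have "(r - c)\<^sup>2 < l\<^sup>2 / 4"
    using power2_strict_mono[of "r - c" "l / 2"] by (simp add: power_divide)
  moreover have "r \<le> 2"
    using assms by linarith
  then have "c * r \<le> 2"
    using assms(1,6) mult_mono[of c 1 r 2] mult_nonpos_nonneg[of c r] by (cases "c \<ge> 0") auto
  then have "2 * c * r * (1 + z) \<le> 4 * (1 + z)"
    using assms(7) mult_right_mono[of "c * r" 2 "1 + z"] by simp
  moreover have "r\<^sup>2 + 2 * c * r * z + c\<^sup>2 = (r - c)\<^sup>2 + 2 * c * r * (1 + z)"
    by (simp add: power2_eq_square algebra_simps)
  ultimately show ?thesis
    using assms(8) zero_le_power2[of l] by argo
qed

lemma obtain_isCont_radius: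
  fixes f :: "real \<Rightarrow> real"
  assumes "isCont f a" "0 < \<epsilon>"
  obtains \<delta> where "0 < \<delta>" "\<And>t. \<bar>t - a\<bar> < \<delta> \<Longrightarrow> \<bar>f t - f a\<bar> < \<epsilon>"
  using assms unfolding continuous_at_eps_delta dist_real_def by blast

lemma obtain_pos_lower_bound_on_interval:
  fixes P :: "real \<Rightarrow> real"
  assumes "a \<le> b" "\<And>t. a \<le> t \<Longrightarrow> t \<le> b \<Longrightarrow> isCont P t \<and> 0 < P t"
  obtains m where "0 < m" "\<And>t. a \<le> t \<Longrightarrow> t \<le> b \<Longrightarrow> m \<le> P t"
proof -
  have "continuous_on {a..b} P"
    using assms(2) by (intro continuous_at_imp_continuous_on) auto
  then obtain t\<^sub>m where "t\<^sub>m \<in> {a..b}" "\<And>t. t \<in> {a..b} \<Longrightarrow> P t\<^sub>m \<le> P t"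
    using continuous_attains_inf[of "{a..b}" P] assms(1) by auto
  with assms(2) show thesis
    by (intro that[of "P t\<^sub>m"]) auto
qed

text \<open>
  In the next three lemmas (r, t) are polar coordinates of a point x, and the hypotheses
  l^2 \<le> r^2 - 2 r cos t + 1 and l^2 \<le> r^2 + 2 c r cos t + c^2 say that x has distance at least l
  from e1 and from -c e1 respectively.
\<close>

lemma radial_lower_bound_near_0:
  fixes h :: "real \<Rightarrow> real" and l :: real
  assumes "0 < l" and h_le: "\<And>t. 0 \<le> t \<Longrightarrow> t \<le> pi \<Longrightarrow> 0 \<le> h t \<and> h t \<le> t"
  obtains \<alpha> where "0 < \<alpha>"
    "\<And>r t. 0 \<le> r \<Longrightarrow> 0 \<le> t \<Longrightarrow> t < \<alpha> \<Longrightarrow> t \<le> pi \<Longrightarrow> l\<^sup>2 \<le> r\<^sup>2 - 2 * r * cos t + 1 \<Longrightarrow>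
      min (l / 4) 1 \<le> \<bar>r - cos (h t)\<bar>"
proof -
  have "0 < min (l / 4) (l\<^sup>2 / 16)"
    using \<open>0 < l\<close> by simp
  from obtain_isCont_radius[OF isCont_cos[of 0] this]
  obtain \<alpha> where "0 < \<alpha>" and near_0: "\<And>t. \<bar>t - 0\<bar> < \<alpha> \<Longrightarrow> \<bar>cos t - cos 0\<bar> < min (l / 4) (l\<^sup>2 / 16)"
    by blast
  show thesis
  proof (rule that[OF \<open>0 < \<alpha>\<close>], rule ccontr)
    fix r t
    assume r: "0 \<le> r" and t: "0 \<le> t" "t < \<alpha>" "t \<le> pi" and far: "l\<^sup>2 \<le> r\<^sup>2 - 2 * r * cos t + 1"
      and "\<not> min (l / 4) 1 \<le> \<bar>r - cos (h t)\<bar>"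
    moreover have "cos t \<le> cos (h t)"
      using h_le[of t] t by (intro cos_monotone_0_pi_le) auto
    moreover have "1 - cos t < min (l / 4) (l\<^sup>2 / 16)"
      using near_0[of t] t by auto
    ultimately have "r\<^sup>2 + 2 * 1 * r * (- cos t) + 1\<^sup>2 < l\<^sup>2"
      using cos_le_one[of t] cos_le_one[of "h t"]
      by (intro polar_sq_dist_less[OF r, of "cos (h t)" l 1 "- cos t"]) (auto simp: not_le)
    with far show False
      by simp
  qed
qed

lemma radial_lower_bound_near_pi:
  fixes h :: "real \<Rightarrow> real" and l :: real
  assumes "0 < l" and "isCont h pi"
  obtains \<alpha> where "0 < \<alpha>"
    "\<And>r t. 0 \<le> r \<Longrightarrow> pi - \<alpha> < t \<Longrightarrow> t \<le> pi \<Longrightarrow>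
      l\<^sup>2 \<le> r\<^sup>2 + 2 * cos (h pi) * r * cos t + (cos (h pi))\<^sup>2 \<Longrightarrow> min (l / 4) 1 \<le> \<bar>r - cos (h t)\<bar>"
proof -
  define \<epsilon> where "\<epsilon> = min (l / 4) (l\<^sup>2 / 16)"
  have "0 < \<epsilon>"
    using \<open>0 < l\<close> by (simp add: \<epsilon>_def)
  obtain \<delta>\<^sub>1 where "0 < \<delta>\<^sub>1" and near_pi: "\<And>t. \<bar>t - pi\<bar> < \<delta>\<^sub>1 \<Longrightarrow> \<bar>cos t - cos pi\<bar> < \<epsilon>"
    using obtain_isCont_radius[OF isCont_cos \<open>0 < \<epsilon>\<close>] by blast
  obtain \<delta>\<^sub>2 where "0 < \<delta>\<^sub>2" and near_pi_h: "\<And>t. \<bar>t - pi\<bar> < \<delta>\<^sub>2 \<Longrightarrow> \<bar>cos (h t) - cos (h pi)\<bar> < \<epsilon>"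
    using obtain_isCont_radius[OF _ \<open>0 < \<epsilon>\<close>, where f = "\<lambda>t. cos (h t)" and a = pi] assms(2)
    by (auto intro: continuous_intros)
  define \<alpha> where "\<alpha> = min \<delta>\<^sub>1 \<delta>\<^sub>2"
  have "0 < \<alpha>"
    using \<open>0 < \<delta>\<^sub>1\<close> \<open>0 < \<delta>\<^sub>2\<close> by (simp add: \<alpha>_def)
  show thesis
  proof (rule that[OF \<open>0 < \<alpha>\<close>], rule ccontr)
    fix r t
    assume r: "0 \<le> r" and t: "pi - \<alpha> < t" "t \<le> pi"
      and far: "l\<^sup>2 \<le> r\<^sup>2 + 2 * cos (h pi) * r * cos t + (cos (h pi))\<^sup>2"
      and "\<not> min (l / 4) 1 \<le> \<bar>r - cos (h t)\<bar>"
    moreover have "\<bar>cos t + 1\<bar> < \<epsilon>" "\<bar>cos (h t) - cos (h pi)\<bar> < \<epsilon>"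
      using near_pi[of t] near_pi_h[of t] t by (auto simp: \<alpha>_def)
    ultimately have "r\<^sup>2 + 2 * cos (h pi) * r * cos t + (cos (h pi))\<^sup>2 < l\<^sup>2"
      using cos_ge_minus_one[of t]
      by (intro polar_sq_dist_less[OF r, of "cos (h t)" l "cos (h pi)" "cos t"]) (auto simp: \<epsilon>_def not_le)
    with far show False
      by simp
  qed
qed

lemma polar_lower_bound:
  fixes h P :: "real \<Rightarrow> real" and l :: real
  assumes "0 < l"
    and h_le: "\<And>t. 0 \<le> t \<Longrightarrow> t \<le> pi \<Longrightarrow> 0 \<le> h t \<and> h t \<le> t"
    and h_cont: "isCont h pi"
    and P: "\<And>t. 0 < t \<Longrightarrow> t < pi \<Longrightarrow> isCont P t \<and> 0 < P t"
  obtains C where "0 < C"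
    "\<And>r t. 0 \<le> r \<Longrightarrow> 0 \<le> t \<Longrightarrow> t \<le> pi \<Longrightarrow> l\<^sup>2 \<le> r\<^sup>2 - 2 * r * cos t + 1 \<Longrightarrow>
      l\<^sup>2 \<le> r\<^sup>2 + 2 * cos (h pi) * r * cos t + (cos (h pi))\<^sup>2 \<Longrightarrow>
      C \<le> \<bar>r - cos (h t)\<bar> \<or> (0 < t \<and> t < pi \<and> C \<le> P t)"
proof -
  obtain \<alpha>\<^sub>0 where "0 < \<alpha>\<^sub>0" and near_0: "\<And>r t. 0 \<le> r \<Longrightarrow> 0 \<le> t \<Longrightarrow> t < \<alpha>\<^sub>0 \<Longrightarrow> t \<le> pi \<Longrightarrow>
      l\<^sup>2 \<le> r\<^sup>2 - 2 * r * cos t + 1 \<Longrightarrow> min (l / 4) 1 \<le> \<bar>r - cos (h t)\<bar>"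
    using radial_lower_bound_near_0[OF \<open>0 < l\<close> h_le] by blast
  obtain \<alpha>\<^sub>1 where "0 < \<alpha>\<^sub>1" and near_pi: "\<And>r t. 0 \<le> r \<Longrightarrow> pi - \<alpha>\<^sub>1 < t \<Longrightarrow> t \<le> pi \<Longrightarrow>
      l\<^sup>2 \<le> r\<^sup>2 + 2 * cos (h pi) * r * cos t + (cos (h pi))\<^sup>2 \<Longrightarrow> min (l / 4) 1 \<le> \<bar>r - cos (h t)\<bar>"
    using radial_lower_bound_near_pi[OF \<open>0 < l\<close> h_cont] by blast
  define \<alpha> where "\<alpha> = min (min \<alpha>\<^sub>0 \<alpha>\<^sub>1) 1"
  have "0 < \<alpha>" "\<alpha> \<le> pi - \<alpha>"
    using \<open>0 < \<alpha>\<^sub>0\<close> \<open>0 < \<alpha>\<^sub>1\<close> pi_gt3 by (auto simp: \<alpha>_def)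
  moreover have "isCont P t \<and> 0 < P t" if "\<alpha> \<le> t" "t \<le> pi - \<alpha>" for t
    using P that \<open>0 < \<alpha>\<close> by auto
  ultimately obtain m where "0 < m" and middle: "\<And>t. \<alpha> \<le> t \<Longrightarrow> t \<le> pi - \<alpha> \<Longrightarrow> m \<le> P t"
    using obtain_pos_lower_bound_on_interval by blast
  show thesis
  proof (rule that[of "min (min (l / 4) 1) m"])
    show "0 < min (min (l / 4) 1) m"
      using \<open>0 < l\<close> \<open>0 < m\<close> by simp
    fix r t
    assume r: "0 \<le> r" and t: "0 \<le> t" "t \<le> pi" and far_e1: "l\<^sup>2 \<le> r\<^sup>2 - 2 * r * cos t + 1"
      and far_c: "l\<^sup>2 \<le> r\<^sup>2 + 2 * cos (h pi) * r * cos t + (cos (h pi))\<^sup>2"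
    have "t < \<alpha>\<^sub>0 \<or> pi - \<alpha>\<^sub>1 < t \<or> (\<alpha> \<le> t \<and> t \<le> pi - \<alpha>)"
      by (auto simp: \<alpha>_def)
    then show "min (min (l / 4) 1) m \<le> \<bar>r - cos (h t)\<bar> \<or>
        (0 < t \<and> t < pi \<and> min (min (l / 4) 1) m \<le> P t)"
      using near_0[OF r t(1) _ t(2) far_e1] near_pi[OF r _ t(2) far_c] middle[of t] \<open>0 < \<alpha>\<close>
      by auto
  qed
qed

section \<open>Polar coordinates in R^n\<close>

lemma vnorm_sq: "(vnorm n x)\<^sup>2 = (\<Sum>i<n. (x i)\<^sup>2)"
  by (simp add: vnorm_def sum_nonneg)

lemma vnorm_nonneg: "0 \<le> vnorm n x"
  by (simp add: vnorm_def sum_nonneg)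

lemma vdist_sq: "(vdist n x y)\<^sup>2 = (vnorm n x)\<^sup>2 - 2 * vinner n x y + (vnorm n y)\<^sup>2"
  by (simp add: vdist_def vnorm_sq vinner_def power2_diff sum_subtractf sum.distrib
      sum_distrib_left mult.assoc)

lemma vinner_e1: "1 \<le> n \<Longrightarrow> vinner n x e1 = x 0"
  by (simp add: vinner_def e1_def if_distrib[of "(*) _"] cong: if_cong)

lemma vnorm_e1: "1 \<le> n \<Longrightarrow> vnorm n e1 = 1"
  by (simp add: vnorm_def e1_def if_distrib[of "\<lambda>x. x\<^sup>2"] cong: if_cong)

lemma vnorm_mult: "vnorm n (\<lambda>i. c * x i) = \<bar>c\<bar> * vnorm n x"
  by (simp add: vnorm_def power_mult_distrib real_sqrt_mult flip: sum_distrib_left)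

lemma abs_vinner_le: "\<bar>vinner n x y\<bar> \<le> vnorm n x * vnorm n y"
proof -
  have "\<bar>vinner n x y\<bar> \<le> (\<Sum>i<n. \<bar>x i\<bar> * \<bar>y i\<bar>)"
    unfolding vinner_def abs_mult[symmetric] by (rule sum_abs)
  also have "\<dots> \<le> L2_set x {..<n} * L2_set y {..<n}"
    by (rule L2_set_mult_ineq)
  finally show ?thesis
    by (simp add: L2_set_def vnorm_def)
qed

lemma abs_component_0_le_vnorm: "1 \<le> n \<Longrightarrow> \<bar>x 0\<bar> \<le> vnorm n x"
  using abs_vinner_le[of n x e1] by (simp add: vinner_e1 vnorm_e1)

lemma theta_eq_arccos: "1 \<le> n \<Longrightarrow> theta n x = arccos (x 0 / vnorm n x)"
  by (simp add: theta_def vinner_e1 vnorm_e1)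

lemma component_0_div_vnorm_bounds: "1 \<le> n \<Longrightarrow> -1 \<le> x 0 / vnorm n x \<and> x 0 / vnorm n x \<le> 1"
  using abs_component_0_le_vnorm[of n x]
  by (cases "vnorm n x = 0") (auto simp: divide_le_eq le_divide_eq abs_le_iff)

lemma theta_bounds: "1 \<le> n \<Longrightarrow> 0 \<le> theta n x \<and> theta n x \<le> pi"
  using arccos_bounded component_0_div_vnorm_bounds by (simp add: theta_eq_arccos)

lemma vnorm_mult_cos_theta: "1 \<le> n \<Longrightarrow> vnorm n x * cos (theta n x) = x 0"
  using component_0_div_vnorm_bounds[of n x] abs_component_0_le_vnorm[of n x]
  by (cases "vnorm n x = 0") (auto simp: theta_eq_arccos)

lemma sq_le_vdist_mult_e1:
  assumes "1 \<le> n" "0 \<le> l" "l \<le> vdist n x (\<lambda>i. \<beta> * e1 i)"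
  shows "l\<^sup>2 \<le> (vnorm n x)\<^sup>2 - 2 * \<beta> * vnorm n x * cos (theta n x) + \<beta>\<^sup>2"
proof -
  have "vinner n x (\<lambda>i. \<beta> * e1 i) = \<beta> * vinner n x e1"
    by (simp add: vinner_def sum_distrib_left mult.left_commute)
  then have "(vdist n x (\<lambda>i. \<beta> * e1 i))\<^sup>2 = (vnorm n x)\<^sup>2 - 2 * \<beta> * vnorm n x * cos (theta n x) + \<beta>\<^sup>2"
    using assms(1) by (simp add: vdist_sq vnorm_mult vnorm_e1 vinner_e1 vnorm_mult_cos_theta mult.assoc)
  with power_mono[OF assms(3,2), of 2] show ?thesis
    by simp
qed

lemma theta_mult: "0 < c \<Longrightarrow> theta n (\<lambda>i. c * x i) = theta n x"
  by (simp add: theta_def vnorm_mult vinner_def mult.assoc flip: sum_distrib_left)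

lemma L_mult:
  "0 < c \<Longrightarrow>
    L d n (\<lambda>i. c * x i) = (c * vnorm n x)\<^sup>2 / 2 - c * vnorm n x * cos ((g ^^ d) (theta n x)) + 1 / 2"
  by (simp add: L_def vnorm_mult theta_mult)

lemma vnorm_plane:
  assumes "1 \<le> n" "u 0 = 0" "vnorm n u = 1"
  shows "vnorm n (\<lambda>i. \<alpha> * e1 i + \<beta> * u i) = sqrt (\<alpha>\<^sup>2 + \<beta>\<^sup>2)"
proof -
  have "(\<alpha> * e1 i + \<beta> * u i)\<^sup>2 = \<alpha>\<^sup>2 * (e1 i)\<^sup>2 + \<beta>\<^sup>2 * (u i)\<^sup>2" for i
    using assms(2) by (cases "i = 0") (auto simp: e1_def power_mult_distrib)
  then have "(vnorm n (\<lambda>i. \<alpha> * e1 i + \<beta> * u i))\<^sup>2 = \<alpha>\<^sup>2 * (vnorm n e1)\<^sup>2 + \<beta>\<^sup>2 * (vnorm n u)\<^sup>2"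
    by (simp add: vnorm_sq sum.distrib sum_distrib_left)
  then have "(vnorm n (\<lambda>i. \<alpha> * e1 i + \<beta> * u i))\<^sup>2 = \<alpha>\<^sup>2 + \<beta>\<^sup>2"
    using assms by (simp add: vnorm_e1)
  from real_sqrt_unique[OF this vnorm_nonneg] show ?thesis ..
qed

lemma L_plane:
  assumes "1 \<le> n" "u 0 = 0" "vnorm n u = 1"
  shows "L d n (\<lambda>i. \<alpha> * e1 i + \<beta> * u i) = (\<alpha>\<^sup>2 + \<beta>\<^sup>2) / 2
    - sqrt (\<alpha>\<^sup>2 + \<beta>\<^sup>2) * cos ((g ^^ d) (arccos (\<alpha> / sqrt (\<alpha>\<^sup>2 + \<beta>\<^sup>2)))) + 1 / 2"
  using assms by (simp add: L_def vnorm_plane theta_eq_arccos) (simp add: e1_def)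

lemma obtain_polar_decomposition:
  assumes "1 \<le> n" "x \<in> Rn n" "0 < vnorm n x" "0 < sin (theta n x)"
  obtains u where "u \<in> Rn n" "u 0 = 0" "vnorm n u = 1"
    "x = (\<lambda>i. vnorm n x * cos (theta n x) * e1 i + vnorm n x * sin (theta n x) * u i)"
proof
  define s where "s = vnorm n x * sin (theta n x)"
  let ?y = "\<lambda>i. x i - x 0 * e1 i"
  have "0 < s"
    using assms(3,4) by (simp add: s_def)
  have "vinner n x (\<lambda>i. x 0 * e1 i) = x 0 * vinner n x e1"
    by (simp add: vinner_def sum_distrib_left mult.left_commute)
  then have "(vnorm n ?y)\<^sup>2 = (vnorm n x)\<^sup>2 - (vnorm n x * cos (theta n x))\<^sup>2"
    using vdist_sq[of n x "\<lambda>i. x 0 * e1 i"] assms(1)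
    by (simp add: vdist_def vnorm_mult vnorm_e1 vinner_e1 vnorm_mult_cos_theta power2_eq_square)
  also have "\<dots> = s\<^sup>2"
    by (simp add: s_def power_mult_distrib sin_squared_eq algebra_simps)
  finally have "vnorm n ?y = s"
    using \<open>0 < s\<close> vnorm_nonneg[of n ?y] by (simp add: power2_eq_iff_nonneg)
  then show "vnorm n (\<lambda>i. inverse s * ?y i) = 1"
    using \<open>0 < s\<close> by (simp add: vnorm_mult)
  show "(\<lambda>i. inverse s * ?y i) \<in> Rn n" "inverse s * ?y 0 = 0"
    using assms(2) by (auto simp: Rn_def e1_def)
  show "x = (\<lambda>i. vnorm n x * cos (theta n x) * e1 i + vnorm n x * sin (theta n x) * (inverse s * ?y i))"
    using \<open>0 < s\<close> vnorm_mult_cos_theta[OF assms(1)] by (simp add: mult.assoc[symmetric] flip: s_def)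
qed

lemma L_tangent_line:
  assumes "1 \<le> n" "u 0 = 0" "vnorm n u = 1" "0 < r"
  shows "L d n (\<lambda>i. (r * cos \<theta> * e1 i + r * sin \<theta> * u i) + t * (- (r * sin \<theta>) * e1 i + r * cos \<theta> * u i))
    = (r * sqrt (1 + t\<^sup>2))\<^sup>2 / 2
      - r * sqrt (1 + t\<^sup>2) * cos ((g ^^ d) (arccos ((cos \<theta> - t * sin \<theta>) / sqrt (1 + t\<^sup>2)))) + 1 / 2"
proof -
  have "(\<lambda>i. (r * cos \<theta> * e1 i + r * sin \<theta> * u i) + t * (- (r * sin \<theta>) * e1 i + r * cos \<theta> * u i)) =
      (\<lambda>i. r * (cos \<theta> - t * sin \<theta>) * e1 i + r * (sin \<theta> + t * cos \<theta>) * u i)"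
    by (simp add: algebra_simps)
  moreover have "(r * (cos \<theta> - t * sin \<theta>))\<^sup>2 + (r * (sin \<theta> + t * cos \<theta>))\<^sup>2
      = r\<^sup>2 * (1 + t\<^sup>2) * ((sin \<theta>)\<^sup>2 + (cos \<theta>)\<^sup>2)"
    unfolding power2_eq_square by algebra
  ultimately show ?thesis
    using assms by (simp add: L_plane power_mult_distrib real_sqrt_mult)
qed

section \<open>Directional derivatives of L\<close>

lemma has_grad_directional_derivative:
  assumes "has_grad n f x G" "x \<in> Rn n" "v \<in> Rn n"
  shows "((\<lambda>t. f (\<lambda>i. x i + t * v i)) has_real_derivative vinner n G v) (at 0)"
  unfolding has_field_derivative_def has_derivative_at_alt
proof (intro conjI allI impI bounded_linear_mult_right)
  fix e :: real
  assume "0 < e"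
  \<comment> \<open>Using |v| + 1 rather than |v| avoids a case split on v = 0.\<close>
  let ?N = "vnorm n v + 1"
  have "0 < ?N"
    using vnorm_nonneg[of n v] by linarith
  then have "0 < e / ?N"
    using \<open>0 < e\<close> by simp
  then obtain \<delta> where "0 < \<delta>" and \<delta>: "\<And>y. y \<in> Rn n \<Longrightarrow> vdist n y x < \<delta> \<Longrightarrow>
      \<bar>f y - f x - vinner n G (\<lambda>i. y i - x i)\<bar> \<le> e / ?N * vdist n y x"
    using assms(1) unfolding has_grad_def by blast
  show "\<exists>d>0. \<forall>t. norm (t - 0) < d \<longrightarrow> norm (f (\<lambda>i. x i + t * v i) - f (\<lambda>i. x i + 0 * v i)
      - vinner n G v * (t - 0)) \<le> e * norm (t - 0)"
  proof (intro exI[of _ "\<delta> / ?N"] conjI allI impI)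
    show "0 < \<delta> / ?N"
      using \<open>0 < \<delta>\<close> \<open>0 < ?N\<close> by simp
    fix t :: real
    assume "norm (t - 0) < \<delta> / ?N"
    then have "\<bar>t\<bar> * ?N < \<delta>"
      using \<open>0 < ?N\<close> by (simp add: less_divide_eq)
    let ?y = "\<lambda>i. x i + t * v i"
    have dist: "vdist n ?y x = \<bar>t\<bar> * vnorm n v"
      by (simp add: vdist_def vnorm_mult)
    have "?y \<in> Rn n"
      using assms(2,3) by (simp add: Rn_def)
    moreover have "\<bar>t\<bar> * vnorm n v \<le> \<bar>t\<bar> * ?N"
      by (simp add: mult_left_mono)
    then have "vdist n ?y x < \<delta>"
      using \<open>\<bar>t\<bar> * ?N < \<delta>\<close> dist by linarith
    moreover have "vinner n G (\<lambda>i. ?y i - x i) = vinner n G v * t"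
      by (simp add: vinner_def sum_distrib_left mult.left_commute mult.commute)
    ultimately have "\<bar>f ?y - f x - vinner n G v * t\<bar> \<le> e / ?N * (\<bar>t\<bar> * vnorm n v)"
      using \<delta>[of ?y] dist by simp
    also have "\<dots> \<le> e / ?N * (\<bar>t\<bar> * ?N)"
      using \<open>0 < e\<close> \<open>0 < ?N\<close> by (intro mult_left_mono) (simp_all add: mult_left_mono)
    also have "\<dots> = e * \<bar>t\<bar>"
      using \<open>0 < ?N\<close> by simp
    finally show "norm (f ?y - f (\<lambda>i. x i + 0 * v i) - vinner n G v * (t - 0)) \<le> e * norm (t - 0)"
      by simp
  qed
qed

lemma directional_derivative_le_vnorm_grad:
  assumes "has_grad n f x G" "x \<in> Rn n" "v \<in> Rn n"
    and "((\<lambda>t. f (\<lambda>i. x i + t * v i)) has_real_derivative D) (at 0)"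
  shows "\<bar>D\<bar> \<le> vnorm n G * vnorm n v"
  using DERIV_unique[OF assms(4) has_grad_directional_derivative[OF assms(1-3)]]
    abs_vinner_le[of n G v] by simp

lemma radial_derivative_bound:
  assumes "has_grad n (L d n) x G" "x \<in> Rn n" "0 < vnorm n x"
  shows "\<bar>vnorm n x - cos ((g ^^ d) (theta n x))\<bar> \<le> vnorm n G"
proof -
  let ?r = "vnorm n x" and ?u = "cos ((g ^^ d) (theta n x))"
  let ?F = "\<lambda>t. ((1 + t) * ?r)\<^sup>2 / 2 - (1 + t) * ?r * ?u + 1 / 2"
  have "\<forall>\<^sub>F t in nhds 0. t \<in> {-1::real<..}"
    by (rule eventually_nhds_in_open) auto
  then have ev: "\<forall>\<^sub>F t in nhds 0. L d n (\<lambda>i. x i + t * x i) = ?F t"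
    by (rule eventually_mono) (use L_mult[of "1 + _"] in \<open>auto simp: algebra_simps\<close>)
  have "(?F has_real_derivative ?r * (?r - ?u)) (at 0)"
    by (auto intro!: derivative_eq_intros simp: algebra_simps power2_eq_square)
  then have "((\<lambda>t. L d n (\<lambda>i. x i + t * x i)) has_real_derivative ?r * (?r - ?u)) (at 0)"
    using DERIV_cong_ev[OF refl ev refl] by simp
  from directional_derivative_le_vnorm_grad[OF assms(1,2,2) this]
  show ?thesis
    using assms(3) by (simp add: abs_mult mult.commute)
qed

lemma has_real_derivative_arccos_tangent:
  fixes \<theta> :: real
  assumes "0 < \<theta>" "\<theta> < pi"
  shows "((\<lambda>t. arccos ((cos \<theta> - t * sin \<theta>) / sqrt (1 + t\<^sup>2))) has_real_derivative 1) (at 0)"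
proof -
  have "0 < sin \<theta>"
    using assms by (simp add: sin_gt_zero)
  then have "(cos \<theta>)\<^sup>2 < 1"
    by (simp add: cos_squared_eq)
  then have "-1 < cos \<theta>" "cos \<theta> < 1"
    by (simp_all add: abs_square_less_1 abs_less_iff)
  then have "((\<lambda>t. arccos ((cos \<theta> - t * sin \<theta>) / sqrt (1 + t\<^sup>2))) has_real_derivative
      inverse (- sqrt (1 - (cos \<theta>)\<^sup>2)) * (- sin \<theta>)) (at 0)"
    by (auto intro!: derivative_eq_intros DERIV_chain2[OF DERIV_arccos])
  also have "inverse (- sqrt (1 - (cos \<theta>)\<^sup>2)) * (- sin \<theta>) = 1"
    using \<open>0 < sin \<theta>\<close> by (simp flip: sin_squared_eq)
  finally show ?thesis .
qed

lemma angular_derivative_bound: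
  assumes "1 \<le> n" "has_grad n (L d n) x G" "x \<in> Rn n" "0 < vnorm n x"
    and "0 < theta n x" "theta n x < pi"
  shows "sin ((g ^^ d) (theta n x)) * funpow_g_deriv d (theta n x) \<le> vnorm n G"
proof -
  define r where "r = vnorm n x"
  define \<theta> where "\<theta> = theta n x"
  have \<theta>: "0 < \<theta>" "\<theta> < pi"
    using assms by (simp_all add: \<theta>_def)
  have "0 < r" "0 < sin \<theta>"
    using assms \<theta> by (simp_all add: r_def sin_gt_zero)
  then obtain u where u: "u \<in> Rn n" "u 0 = 0" "vnorm n u = 1"
    and x_eq: "x = (\<lambda>i. r * cos \<theta> * e1 i + r * sin \<theta> * u i)"
    using obtain_polar_decomposition[OF assms(1,3)] by (auto simp: r_def \<theta>_def)
  \<comment> \<open>w is tangent at x to the circle of radius r in the plane of e1 and x.\<close>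
  define w where "w = (\<lambda>i. - (r * sin \<theta>) * e1 i + r * cos \<theta> * u i)"
  have "w \<in> Rn n"
    using u assms(1) by (simp add: w_def Rn_def e1_def)
  have "vnorm n w = r"
    using \<open>0 < r\<close> unfolding w_def vnorm_plane[OF assms(1) u(2,3)]
    by (simp add: power_mult_distrib flip: distrib_left)
  define H where "H t = (g ^^ d) (arccos ((cos \<theta> - t * sin \<theta>) / sqrt (1 + t\<^sup>2)))" for t
  have "H 0 = (g ^^ d) \<theta>"
    using \<theta> by (simp add: H_def arccos_cos)
  moreover have "(H has_real_derivative funpow_g_deriv d \<theta> * 1) (at 0)"
    using DERIV_chain2[OF has_real_derivative_funpow_g has_real_derivative_arccos_tangent] \<theta>
    by (simp add: H_def[abs_def] arccos_cos)
  ultimately have "((\<lambda>t. (r * sqrt (1 + t\<^sup>2))\<^sup>2 / 2 - r * sqrt (1 + t\<^sup>2) * cos (H t) + 1 / 2)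
      has_real_derivative r * (sin ((g ^^ d) \<theta>) * funpow_g_deriv d \<theta>)) (at 0)"
    by (auto intro!: derivative_eq_intros)
  moreover have "L d n (\<lambda>i. x i + t * w i)
      = (r * sqrt (1 + t\<^sup>2))\<^sup>2 / 2 - r * sqrt (1 + t\<^sup>2) * cos (H t) + 1 / 2" for t
    unfolding H_def w_def using L_tangent_line[OF assms(1) u(2,3) \<open>0 < r\<close>] by (subst x_eq) simp
  ultimately have "\<bar>r * (sin ((g ^^ d) \<theta>) * funpow_g_deriv d \<theta>)\<bar> \<le> vnorm n G * r"
    using directional_derivative_le_vnorm_grad[OF assms(2,3) \<open>w \<in> Rn n\<close>] \<open>vnorm n w = r\<close>
    by simp
  then have "\<bar>sin ((g ^^ d) \<theta>) * funpow_g_deriv d \<theta>\<bar> \<le> vnorm n G"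
    using \<open>0 < r\<close> by (simp add: abs_mult mult.commute)
  then show ?thesis
    unfolding \<theta>_def by linarith
qed

lemma funpow_g_polar_lower_bound:
  assumes "0 < l"
  obtains C where "0 < C"
    "\<And>r t. 0 \<le> r \<Longrightarrow> 0 \<le> t \<Longrightarrow> t \<le> pi \<Longrightarrow> l\<^sup>2 \<le> r\<^sup>2 - 2 * r * cos t + 1 \<Longrightarrow>
      l\<^sup>2 \<le> r\<^sup>2 + 2 * cos ((g ^^ d) pi) * r * cos t + (cos ((g ^^ d) pi))\<^sup>2 \<Longrightarrow>
      C \<le> \<bar>r - cos ((g ^^ d) t)\<bar> \<or>
      (0 < t \<and> t < pi \<and> C \<le> sin ((g ^^ d) t) * funpow_g_deriv d t)"
proof (rule polar_lower_bound[OF assms])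
  have cont: "isCont (g ^^ d) t" if "0 < t" "t \<le> pi" for t
    using DERIV_isCont[OF has_real_derivative_funpow_g[OF that]] .
  then show "isCont (g ^^ d) pi"
    by simp
  fix t :: real
  assume "0 < t" "t < pi"
  then have "0 < (g ^^ d) t" "(g ^^ d) t < pi"
    using funpow_g_pos[of t d] funpow_g_le_self[of t d] by auto
  then show "isCont (\<lambda>t. sin ((g ^^ d) t) * funpow_g_deriv d t) t \<and>
      0 < sin ((g ^^ d) t) * funpow_g_deriv d t"
    using \<open>0 < t\<close> \<open>t < pi\<close> cont isCont_funpow_g_deriv funpow_g_deriv_pos sin_gt_zero
    by (auto intro!: continuous_intros)
qed (use funpow_g_le_self in auto)

theorem mainTheorem5:
  fixes d :: nat and l :: real
  assumes "d \<ge> 1" and "l > 0"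
  shows "\<exists>C>0. \<forall>n\<ge>1. \<forall>x\<in>Rn n.
           vdist n x (\<lambda>i. 0) \<ge> l \<and> vdist n x e1 \<ge> l \<and>
           vdist n x (\<lambda>i. - cos ((g ^^ d) pi) * e1 i) \<ge> l \<and>
           differentiable_Rn n (L d n) x \<longrightarrow>
           (\<forall>G. has_grad n (L d n) x G \<longrightarrow> vnorm n G \<ge> C)"
proof -
  obtain C where "0 < C" and C: "\<And>r t. 0 \<le> r \<Longrightarrow> 0 \<le> t \<Longrightarrow> t \<le> pi \<Longrightarrow>
      l\<^sup>2 \<le> r\<^sup>2 - 2 * r * cos t + 1 \<Longrightarrow>
      l\<^sup>2 \<le> r\<^sup>2 + 2 * cos ((g ^^ d) pi) * r * cos t + (cos ((g ^^ d) pi))\<^sup>2 \<Longrightarrow>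
      C \<le> \<bar>r - cos ((g ^^ d) t)\<bar> \<or> (0 < t \<and> t < pi \<and> C \<le> sin ((g ^^ d) t) * funpow_g_deriv d t)"
    using funpow_g_polar_lower_bound[OF \<open>l > 0\<close>] by blast
  have "C \<le> vnorm n G"
    if n: "1 \<le> n" and x: "x \<in> Rn n" and grad: "has_grad n (L d n) x G"
      and "l \<le> vdist n x (\<lambda>i. 0)" "l \<le> vdist n x e1" "l \<le> vdist n x (\<lambda>i. - cos ((g ^^ d) pi) * e1 i)"
    for n x G
  proof -
    have "0 < vnorm n x"
      using that \<open>l > 0\<close> by (simp add: vdist_def)
    have "l\<^sup>2 \<le> (vnorm n x)\<^sup>2 - 2 * vnorm n x * cos (theta n x) + 1"
      using that \<open>l > 0\<close> sq_le_vdist_mult_e1[OF n, of l x 1] by simp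
    moreover have "l\<^sup>2 \<le> (vnorm n x)\<^sup>2 + 2 * cos ((g ^^ d) pi) * vnorm n x * cos (theta n x)
        + (cos ((g ^^ d) pi))\<^sup>2"
      using that \<open>l > 0\<close> sq_le_vdist_mult_e1[OF n, of l x "- cos ((g ^^ d) pi)"] by simp
    ultimately consider "C \<le> \<bar>vnorm n x - cos ((g ^^ d) (theta n x))\<bar>"
      | "0 < theta n x" "theta n x < pi" "C \<le> sin ((g ^^ d) (theta n x)) * funpow_g_deriv d (theta n x)"
      using C vnorm_nonneg theta_bounds[OF n] by blast
    then show ?thesis
      using radial_derivative_bound[OF grad x \<open>0 < vnorm n x\<close>]
        angular_derivative_bound[OF n grad x \<open>0 < vnorm n x\<close>] by cases linarith+
  qed
  with \<open>0 < C\<close> show ?thesis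
    by auto
qed

end
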